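(* Let $(\mathcal{T},X,r)$ be a nice tree decomposition of a terminal graph $(G,T)$ of width at most $w\ge1$, and let $n=|V(G)|\ge1$. Then $|V(\mathcal{T})|\le (w+4)n$.
   Context: A terminal graph $(G,T)$ is a graph with $T\subseteq V(G)$. $(G,T)$ is obtained from $(G-v,T\setminus\{v\})$ by introducing $v$ if $T\ne V(G)$, $v\in T$ and $N(v)\subseteq T$. $(G,T)$ is the join of $(G_1,T)$ and $(G_2,T)$ if $G_1,G_2$ are induced subgraphs of $G$, $V(G_1)\cap V(G_2)=T$, $V(G_1)\cup V(G_2)=V(G)$, $V(G_1)\ne T\ne V(G_2)$, and every edge of $G$ lies in $G_1$ or $G_2$. A nice tree decomposition of $(G,T)$ is a triple $(\mathcal{T},X,r)$ with $\mathcal{T}$ a tree rooted at $r$ and bags $X_u\subseteq V(G)$, defined recursively: (1) if $T=V(G)$, $\mathcal{T}$ may be the single node $r$ with $X_r=T$; (2) if $v\in V(G)\setminus T$ and $(\mathcal{T}',X,r')$ is a nice tree decomposition of $(G,T\cup\{v\})$, adding a new root $r$ with $X_r=T$ and edge $rr'$ gives one for $(G,T)$; (3) if $(G,T)$ is obtained from $(G-v,T\setminus\{v\})$ by introducing $v$ and $(\mathcal{T}',X,r')$ is one for $(G-v,T\setminus\{v\})$, adding a new root $r$ with $X_r=T$ and edge $rr'$ gives one for $(G,T)$; (4) if $(G,T)$ is the join of $(G_1,T)$ and $(G_2,T)$ with nice tree decompositions $(\mathcal{T}_i,X,r_i)$, adding a new root $r$ with $X_r=T$ and edges $rr_1,rr_2$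 gives one for $(G,T)$. The width is $\max_u |X_u|-1$. *)

theory Defs
  imports Main
begin

definition graph :: "'a set \<Rightarrow> 'a set set \<Rightarrow> bool" where
  "graph V E \<longleftrightarrow> finite V \<and> (\<forall>e\<in>E. \<exists>u v. u \<noteq> v \<and> e = {u, v} \<and> u \<in> V \<and> v \<in> V)"

definition terminal_graph :: "'a set \<Rightarrow> 'a set set \<Rightarrow> 'a set \<Rightarrow> bool" where
  "terminal_graph V E T \<longleftrightarrow> graph V E \<and> T \<subseteq> V"

definition nbhd :: "'a set set \<Rightarrow> 'a \<Rightarrow> 'a set" where
  "nbhd E v = {u. {u, v} \<in> E \<and> u \<noteq> v}"

text \<open>(G,T) is obtained from (G - v, T - {v}) by introducing v.\<close>
definition introduces :: "'a set \<Rightarrow> 'a set set \<Rightarrow> 'a set \<Rightarrow> 'a \<Rightarrow> bool" where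
  "introduces V E T v \<longleftrightarrow> T \<noteq> V \<and> v \<in> T \<and> nbhd E v \<subseteq> T"

definition is_join :: "'a set \<Rightarrow> 'a set set \<Rightarrow> 'a set \<Rightarrow> 'a set \<Rightarrow> 'a set set \<Rightarrow> 'a set \<Rightarrow> 'a set set \<Rightarrow> bool" where
  "is_join V E T V1 E1 V2 E2 \<longleftrightarrow>
     V1 \<subseteq> V \<and> V2 \<subseteq> V \<and>
     E1 = {e \<in> E. e \<subseteq> V1} \<and> E2 = {e \<in> E. e \<subseteq> V2} \<and>
     V1 \<inter> V2 = T \<and> V1 \<union> V2 = V \<and> V1 \<noteq> T \<and> V2 \<noteq> T \<and>
     E = E1 \<union> E2"

datatype 'a dtree = Leaf "'a set" | Unary "'a set" "'a dtree" | Binary "'a set" "'a dtree" "'a dtree"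

fun num_nodes :: "'a dtree \<Rightarrow> nat" where
  "num_nodes (Leaf _) = 1"
| "num_nodes (Unary _ t) = Suc (num_nodes t)"
| "num_nodes (Binary _ t1 t2) = Suc (num_nodes t1 + num_nodes t2)"

fun bags :: "'a dtree \<Rightarrow> 'a set set" where
  "bags (Leaf X) = {X}"
| "bags (Unary X t) = insert X (bags t)"
| "bags (Binary X t1 t2) = insert X (bags t1 \<union> bags t2)"

definition width_le :: "'a dtree \<Rightarrow> nat \<Rightarrow> bool" where
  "width_le t w \<longleftrightarrow> (\<forall>X\<in>bags t. finite X \<and> card X \<le> w + 1)"

inductive nice_td :: "'a set \<Rightarrow> 'a set set \<Rightarrow> 'a set \<Rightarrow> 'a dtree \<Rightarrow> bool" where
  leaf: "T = V \<Longrightarrow> nice_td V E T (Leaf T)"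
| forget: "v \<in> V - T \<Longrightarrow> nice_td V E (insert v T) t \<Longrightarrow> nice_td V E T (Unary T t)"
| intro: "introduces V E T v \<Longrightarrow>
          nice_td (V - {v}) {e \<in> E. v \<notin> e} (T - {v}) t \<Longrightarrow> nice_td V E T (Unary T t)"
| join: "is_join V E T V1 E1 V2 E2 \<Longrightarrow> nice_td V1 E1 T t1 \<Longrightarrow> nice_td V2 E2 T t2 \<Longrightarrow>
          nice_td V E T (Binary T t1 t2)"

end

theory Submission
  imports Defs
begin

text \<open>For non-full terminal sets we prove the sharper invariant
  \<open>|V(\<T>)| + w + 2 \<le> (w + 4)|V \ T| + |T|\<close> by induction on the decomposition.
  A forget or introduce node is paid for by the vertex it forgets (which leaves \<open>V \ T\<close>)
  or introduces (which leaves \<open>T\<close>); at a join the two non-terminal parts are disjoint,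
  and the bound \<open>|T| \<le> w + 1\<close> on the root bag absorbs the surplus \<open>|T| - w - 2\<close> counted
  twice.  If \<open>T = V\<close> the decomposition is a single leaf.  Since \<open>|T| \<le> (w + 4)|T|\<close>,
  both cases give \<open>|V(\<T>)| \<le> (w + 4)|V|\<close>.\<close>

lemma width_le_simps [simp]:
  "width_le (Leaf X) w \<longleftrightarrow> finite X \<and> card X \<le> w + 1"
  "width_le (Unary X t) w \<longleftrightarrow> finite X \<and> card X \<le> w + 1 \<and> width_le t w"
  "width_le (Binary X t1 t2) w \<longleftrightarrow> finite X \<and> card X \<le> w + 1 \<and> width_le t1 w \<and> width_le t2 w"
  by (auto simp: width_le_def)

lemma nice_td_all_terminals:
  assumes "nice_td V E V t"
  shows "t = Leaf V"
  using assms
proof cases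
  case (join V1 E1 V2 E2 t1 t2)
  then have "V1 \<subseteq> V" "V1 \<inter> V2 = V" "V1 \<noteq> V" unfolding is_join_def by blast+
  then show ?thesis by blast
next
  case forget
  then show ?thesis by simp
next
  case intro
  then show ?thesis by (simp add: introduces_def)
qed simp

lemma nice_td_num_nodes_bound:
  assumes "nice_td V E T t" and "finite V" and "T \<subseteq> V" and "width_le t w" and "T \<noteq> V"
  shows "num_nodes t + w + 2 \<le> (w + 4) * card (V - T) + card T"
  using assms
proof (induction rule: nice_td.induct)
  case (leaf T V E)
  then show ?case by simp
next
  case (forget v V T E t)
  have "finite T" using forget.prems finite_subset by blast
  then have card_insert: "card (insert v T) = Suc (card T)"
    using forget.hyps by simp
  have diff: "V - T = insert v (V - insert v T)" using forget.hyps by blast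
  have card_diff: "card (V - T) = Suc (card (V - insert v T))"
    unfolding diff using forget.prems by simp
  show ?case
  proof (cases "insert v T = V")
    case True
    then have "t = Leaf V" using forget.hyps nice_td_all_terminals by blast
    then show ?thesis using True card_diff by simp
  next
    case False
    then have "num_nodes t + w + 2 \<le> (w + 4) * card (V - insert v T) + card (insert v T)"
      using forget.IH forget.prems forget.hyps by auto
    then show ?thesis using card_insert card_diff by simp
  qed
next
  case (intro V E T v t)
  have v: "v \<in> T" and "T \<noteq> V" using intro.hyps by (auto simp: introduces_def)
  have "finite T" using intro.prems finite_subset by blast
  then have card_T: "card T = Suc (card (T - {v}))"
    using v by (rule card.remove)
  have same_diff: "(V - {v}) - (T - {v}) = V - T" using v by blast
  have "num_nodes t + w + 2 \<le> (w + 4) * card (V - T) + card (T - {v})"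
    using intro.IH intro.prems \<open>T \<noteq> V\<close> v same_diff by auto
  then show ?case using card_T by simp
next
  case (join V E T V1 E1 V2 E2 t1 t2)
  have J: "V1 \<subseteq> V" "V2 \<subseteq> V" "V1 \<inter> V2 = T" "V1 \<union> V2 = V" "V1 \<noteq> T" "V2 \<noteq> T"
    using join.hyps(1) unfolding is_join_def by blast+
  have "finite V1" "finite V2" using J(1,2) join.prems(1) finite_subset by auto
  have IH1: "num_nodes t1 + w + 2 \<le> (w + 4) * card (V1 - T) + card T"
    using join.IH(1) \<open>finite V1\<close> J(3,5) join.prems(3) by auto
  have IH2: "num_nodes t2 + w + 2 \<le> (w + 4) * card (V2 - T) + card T"
    using join.IH(2) \<open>finite V2\<close> J(3,6) join.prems(3) by auto
  have "V - T = (V1 - T) \<union> (V2 - T)" and "(V1 - T) \<inter> (V2 - T) = {}"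
    using J by blast+
  then have card_split: "card (V - T) = card (V1 - T) + card (V2 - T)"
    using \<open>finite V1\<close> \<open>finite V2\<close> by (simp add: card_Un_disjoint)
  have "card T \<le> w + 1" using join.prems by simp
  then show ?case using IH1 IH2 card_split by (simp add: add_mult_distrib2)
qed

theorem lemma5:
  fixes V :: "'a set" and E :: "'a set set" and T :: "'a set" and t :: "'a dtree" and w :: nat
  assumes "terminal_graph V E T"
    and "nice_td V E T t"
    and "width_le t w"
    and "w \<ge> 1"
    and "card V \<ge> 1"
  shows "num_nodes t \<le> (w + 4) * card V"
proof (cases "T = V")
  case True
  then have "t = Leaf V" using assms(2) nice_td_all_terminals by blast
  then show ?thesis using assms(5) by (simp add: one_le_mult_iff)
next
  case False
  have "finite V" and "T \<subseteq> V" using assms(1) by (auto simp: terminal_graph_def graph_def)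
  then have card_V: "card V = card (V - T) + card T"
    by (metis card_Diff_subset card_mono diff_add finite_subset)
  moreover have "num_nodes t + w + 2 \<le> (w + 4) * card (V - T) + card T"
    using nice_td_num_nodes_bound assms(2,3) \<open>finite V\<close> \<open>T \<subseteq> V\<close> False by blast
  moreover have "card T \<le> (w + 4) * card T" by simp
  ultimately have "num_nodes t \<le> (w + 4) * card (V - T) + (w + 4) * card T" by linarith
  then show ?thesis by (simp only: card_V add_mult_distrib2)
qed

end
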